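(* Let $\mathcal{X}=\{x\in\mathbb{R}^d:\|x\|_2\le r\}$, $\mathcal{Y}=\{-1,+1\}$, $\mathcal{Z}=\mathcal{X}\times\mathcal{Y}$ with metric $d_\mathcal{Z}((x,y),(x',y'))=\|x-x'\|_2+\mathbb{1}_{(y\ne y')}$, and $\mathcal{F}=\{(x,y)\mapsto\max\{0,1-y\,w\cdot x\}:\|w\|_2\le\Lambda\}$. Let $\mathcal{B}\subseteq\mathbb{R}^d$ be nonempty, closed, convex, origin-symmetric, $N(x)=\{x'\in\mathcal{X}:x'-x\in\mathcal{B}\}$ (nonempty), $\epsilon_\mathcal{B}=\sup_{v\in\mathcal{B}}\|v\|_2$. Let $z_i=(x_i,y_i)$, $i=1,\dots,n$, be i.i.d. from a distribution $P$ on $\mathcal{Z}$, with empirical distribution $P_n$. Then for any $f\in\mathcal{F}$ (with weight vector $w$) and $\delta\in(0,1)$, with probability at least $1-\delta$, $$R_P(f,\mathcal{B})\le\frac1n\sum_{i=1}^nf(z_i)+\lambda^+_{f,P_n}\epsilon_\mathcal{B}+\frac{144}{\sqrt n}\Lambda r\sqrt d+\frac{12\sqrt\pi}{\sqrt n}\Lambda_{\epsilon_\mathcal{B}}(2r+1)+(1+\Lambda r)\sqrt{\frac{\log(1/\delta)}{2n}},$$ where $\lambda^+_{f,P_n}\le\max_i\{2y_i\,w\cdot x_i,\|w\|_2\}$.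
   Context: $R_P(f,\mathcal{B}):=\mathbb{E}_{(x,y)\sim P}[\max_{x'\in N(x)}f(x',y)]$. Set $M=1+\Lambda r$. For an empirical distribution $Q_n$ on $\mathcal{Z}$ and $f\in\mathcal{F}$: $\psi_{f,Q_n}(\lambda):=\mathbb{E}_{z\sim Q_n}\big(\sup_{z'\in\mathcal{Z}}\{f(z')-\lambda d_\mathcal{Z}(z,z')-f(z)\}\big)$; $\lambda^+_{f,Q_n}:=\inf\{\lambda:\psi_{f,Q_n}(\lambda)=0\}$; $\lambda^-_{f,Q_n}:=\sup\{\lambda:\psi_{f,Q_n}(\lambda)=\lambda^+_{f,Q_n}\epsilon_\mathcal{B}\}$ if nonempty, else $0$. Let $[\zeta^-_{f,Q_n},\zeta^+_{f,Q_n}]:=[0,M/\epsilon_\mathcal{B}]$ if $\epsilon_\mathcal{B}\ge M/\lambda^+_{f,Q_n}$, else $[\lambda^-_{f,Q_n},\lambda^+_{f,Q_n}]$ ($M/0=+\infty$); $\zeta^-,\zeta^+$ are the infimum of left endpoints and supremum of right endpoints over all $f\in\mathcal{F}$ and all empirical distributions $Q_n$; $\Lambda_{\epsilon_\mathcal{B}}:=\zeta^+-\zeta^-$. *)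

theory Defs
  imports "HOL-Probability.Probability"
begin

definition Zset :: "real \<Rightarrow> ((real^'n) \<times> real) set" where
  "Zset r = cball 0 r \<times> {-1, 1}"

definition dZ :: "((real^'n) \<times> real) \<Rightarrow> ((real^'n) \<times> real) \<Rightarrow> real" where
  "dZ z z' = norm (fst z - fst z') + (if snd z \<noteq> snd z' then 1 else 0)"

definition hinge :: "real^'n \<Rightarrow> (real^'n) \<times> real \<Rightarrow> real" where
  "hinge w z = max 0 (1 - snd z * (w \<bullet> fst z))"

definition Nbhd :: "real \<Rightarrow> (real^'n) set \<Rightarrow> real^'n \<Rightarrow> (real^'n) set" where
  "Nbhd r B x = {x' \<in> cball 0 r. x' - x \<in> B}"

definition epsB :: "(real^'n) set \<Rightarrow> real" where
  "epsB B = (SUP v\<in>B. norm v)"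

definition adv_risk :: "((real^'n) \<times> real) measure \<Rightarrow> real \<Rightarrow> (real^'n) set \<Rightarrow> real^'n \<Rightarrow> real" where
  "adv_risk P r B w = (\<integral>z. (SUP x'\<in>Nbhd r B (fst z). hinge w (x', snd z)) \<partial>P)"

definition emp_mean :: "nat \<Rightarrow> (nat \<Rightarrow> 'z) \<Rightarrow> ('z \<Rightarrow> real) \<Rightarrow> real" where
  "emp_mean n zs g = (\<Sum>i<n. g (zs i)) / real n"

definition psi :: "real \<Rightarrow> real^'n \<Rightarrow> nat \<Rightarrow> (nat \<Rightarrow> (real^'n) \<times> real) \<Rightarrow> real \<Rightarrow> real" where
  "psi r w n zs lam = emp_mean n zs
     (\<lambda>z. (SUP z'\<in>Zset r. hinge w z' - lam * dZ z z' - hinge w z))"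

definition lam_plus :: "real \<Rightarrow> real^'n \<Rightarrow> nat \<Rightarrow> (nat \<Rightarrow> (real^'n) \<times> real) \<Rightarrow> real" where
  "lam_plus r w n zs = Inf {lam. 0 \<le> lam \<and> psi r w n zs lam = 0}"

definition lam_minus :: "real \<Rightarrow> (real^'n) set \<Rightarrow> real^'n \<Rightarrow> nat \<Rightarrow> (nat \<Rightarrow> (real^'n) \<times> real) \<Rightarrow> real" where
  "lam_minus r B w n zs =
     (let S = {lam. 0 \<le> lam \<and> lam \<le> lam_plus r w n zs \<and>
                    psi r w n zs lam = lam_plus r w n zs * epsB B}
      in if S = {} then 0 else Sup S)"

text \<open>Endpoints of the interval [zeta^-, zeta^+] for one f and one empirical distribution,
  with M = 1 + Lambda r; the condition eps_B >= M / lambda^+ is false when lambda^+ = 0.\<close>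
definition zeta_lo :: "real \<Rightarrow> real \<Rightarrow> (real^'n) set \<Rightarrow> real^'n \<Rightarrow> nat \<Rightarrow> (nat \<Rightarrow> (real^'n) \<times> real) \<Rightarrow> real" where
  "zeta_lo r Lam B w n zs =
     (if 0 < lam_plus r w n zs \<and> (1 + Lam * r) / lam_plus r w n zs \<le> epsB B then 0
      else lam_minus r B w n zs)"

definition zeta_hi :: "real \<Rightarrow> real \<Rightarrow> (real^'n) set \<Rightarrow> real^'n \<Rightarrow> nat \<Rightarrow> (nat \<Rightarrow> (real^'n) \<times> real) \<Rightarrow> real" where
  "zeta_hi r Lam B w n zs =
     (if 0 < lam_plus r w n zs \<and> (1 + Lam * r) / lam_plus r w n zs \<le> epsB B
      then (1 + Lam * r) / epsB B
      else lam_plus r w n zs)"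

definition Lambda_eps :: "real \<Rightarrow> real \<Rightarrow> (real^'n) set \<Rightarrow> nat \<Rightarrow> real" where
  "Lambda_eps r Lam B n =
     (SUP p\<in>{(w, zs). norm (w::real^'n) \<le> Lam \<and> (\<forall>i<n. zs i \<in> Zset r)}.
        zeta_hi r Lam B (fst p) n (snd p))
   - (INF p\<in>{(w, zs). norm (w::real^'n) \<le> Lam \<and> (\<forall>i<n. zs i \<in> Zset r)}.
        zeta_lo r Lam B (fst p) n (snd p))"

end

theory Submission
  imports Defs
begin

text \<open>
  For \<open>\<lambda> \<ge> 0\<close> let \<open>\<phi>\<^sub>\<lambda>(z) = sup {f(z') - \<lambda> d(z, z') | z' \<in> Z}\<close> (\<open>surrogate r w \<lambda>\<close>). An
  admissible perturbation moves a point by at most \<open>\<epsilon>\<^sub>B\<close>, so \<open>R\<^sub>P(f, B) \<le> \<lambda> \<epsilon>\<^sub>B + E\<^sub>P \<phi>\<^sub>\<lambda>\<close> for every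
  \<open>\<lambda> \<ge> 0\<close>, in particular for \<open>\<lambda> = \<lambda>\<^sup>+\<close>. Since \<open>\<phi>\<^sub>\<lambda> \<ge> f\<close>, \<open>\<psi>(\<lambda>) = 0\<close> means that \<open>\<phi>\<^sub>\<lambda> = f\<close>
  at every sample point, and this holds for all \<open>\<lambda> > \<lambda>\<^sup>+\<close>.

  The function \<open>\<lambda> \<mapsto> E\<^sub>P \<phi>\<^sub>\<lambda>\<close> is antitone and continuous, so there are \<open>K + 1\<close> values
  \<open>\<lambda>\<^sub>j\<close> at which it takes equally spaced values, with mesh \<open>1/\<surd>n\<close> times the range of \<open>f\<close>.
  Hoeffding's inequality at these fixed \<open>\<lambda>\<^sub>j\<close> and a union bound control \<open>E\<^sub>P \<phi>\<^sub>\<lambda>\<^sub>j\<close> by the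
  empirical mean of \<open>\<phi>\<^sub>\<lambda>\<^sub>j\<close>; at the first grid point to the right of \<open>\<lambda>\<^sup>+\<close> this is the
  empirical mean of \<open>f\<close>. Values of \<open>\<lambda>\<^sup>+\<close> beyond the top of the grid have probability at most
  \<open>exp(-K\<surd>n)\<close>, because they force all \<open>n\<close> samples into a set of measure at most \<open>1 - K/\<surd>n\<close>.

  The bound on
  \<open>\<lambda>\<^sup>+\<close> holds because \<open>\<phi>\<^sub>\<lambda>(x, y) = f(x, y)\<close> as soon as \<open>\<lambda> \<ge> \<parallel>w\<parallel>\<close> and \<open>\<lambda> \<ge> 2 y w\<cdot>x\<close>.
\<close>

lemma mem_Zset_iff [simp]: "(x, y) \<in> Zset r \<longleftrightarrow> norm x \<le> r \<and> (y = -1 \<or> y = 1)"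
  by (auto simp: Zset_def)

lemma Zset_ne: "0 \<le> r \<Longrightarrow> Zset r \<noteq> {}"
  by (auto simp: Zset_def)

lemma closed_Zset: "closed (Zset r)"
  unfolding Zset_def by (intro closed_Times closed_cball finite_imp_closed) simp

lemma dZ_self [simp]: "dZ z z = 0"
  by (simp add: dZ_def)

lemma dZ_nonneg: "0 \<le> dZ z z'"
  by (simp add: dZ_def)

lemma dZ_le: "z \<in> Zset r \<Longrightarrow> z' \<in> Zset r \<Longrightarrow> dZ z z' \<le> 2 * r + 1"
  using norm_triangle_ineq4[of "fst z" "fst z'"] by (auto simp: Zset_def dZ_def)

lemma dZ_fst_triangle: "dZ (x2, y) z' \<le> dZ (x1, y) z' + dist x1 x2"
  using norm_triangle_ineq[of "x2 - x1" "x1 - fst z'"]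
  by (simp add: dZ_def dist_norm norm_minus_commute)

lemma abs_margin_le:
  fixes w x :: "real^'n"
  assumes "(x, y) \<in> Zset r"
  shows "\<bar>y * (w \<bullet> x)\<bar> \<le> norm w * r"
proof -
  have "\<bar>y * (w \<bullet> x)\<bar> = \<bar>w \<bullet> x\<bar>"
    using assms by auto
  also have "\<dots> \<le> norm w * norm x"
    by (rule Cauchy_Schwarz_ineq2)
  also have "\<dots> \<le> norm w * r"
    using assms by (simp add: mult_left_mono)
  finally show ?thesis .
qed

lemma hinge_bounds:
  assumes "z \<in> Zset r"
  shows "max 0 (1 - norm w * r) \<le> hinge w z" and "hinge w z \<le> 1 + norm w * r"
  using abs_margin_le[of "fst z" "snd z" r w] assms
  by (auto simp: hinge_def abs_le_iff)

lemma hinge_fst_le: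
  assumes "\<bar>y\<bar> = 1"
  shows "hinge w (x', y) \<le> hinge w (x, y) + norm w * norm (x - x')"
proof -
  have "y * (w \<bullet> x) - y * (w \<bullet> x') = y * (w \<bullet> (x - x'))"
    by (simp add: inner_diff_right algebra_simps)
  also have "\<dots> \<le> \<bar>w \<bullet> (x - x')\<bar>"
    using assms abs_ge_self[of "y * (w \<bullet> (x - x'))"] by (simp add: abs_mult)
  also have "\<dots> \<le> norm w * norm (x - x')"
    by (rule Cauchy_Schwarz_ineq2)
  finally show ?thesis
    unfolding hinge_def by (simp add: max_def)
qed

lemma hinge_snd_le:
  assumes "y \<in> {-1, 1}" "y' \<in> {-1, 1}" "2 * y * (w \<bullet> x) \<le> lam" "0 \<le> lam"
  shows "hinge w (x, y') \<le> hinge w (x, y) + (if y \<noteq> y' then lam else 0)"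
  using assms unfolding hinge_def by (auto simp: max_def)

definition surrogate :: "real \<Rightarrow> real^'n \<Rightarrow> real \<Rightarrow> (real^'n) \<times> real \<Rightarrow> real" where
  "surrogate r w lam z = (SUP z'\<in>Zset r. hinge w z' - lam * dZ z z')"

definition surrogate_exact :: "real \<Rightarrow> real^'n \<Rightarrow> nat \<Rightarrow> (nat \<Rightarrow> (real^'n) \<times> real) \<Rightarrow> real \<Rightarrow> bool"
  where "surrogate_exact r w n zs lam \<longleftrightarrow> (\<forall>i<n. surrogate r w lam (zs i) = hinge w (zs i))"

context
  fixes r :: real and w :: "real^'n"
  assumes r_nonneg: "0 \<le> r"
begin

lemma surrogate_term_le:
  "0 \<le> lam \<Longrightarrow> z' \<in> Zset r \<Longrightarrow> hinge w z' - lam * dZ z z' \<le> 1 + norm w * r"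
  using hinge_bounds(2)[of z' r w] mult_nonneg_nonneg[OF _ dZ_nonneg, of lam z z'] by linarith

lemma bdd_above_surrogate:
  assumes "0 \<le> lam"
  shows "bdd_above ((\<lambda>z'. hinge w z' - lam * dZ z z') ` Zset r)"
  by (rule bdd_aboveI2) (rule surrogate_term_le[OF assms])

lemma surrogate_ge:
  "0 \<le> lam \<Longrightarrow> z' \<in> Zset r \<Longrightarrow> hinge w z' - lam * dZ z z' \<le> surrogate r w lam z"
  unfolding surrogate_def by (rule cSUP_upper[OF _ bdd_above_surrogate])

lemma surrogate_leI:
  "(\<And>z'. z' \<in> Zset r \<Longrightarrow> hinge w z' - lam * dZ z z' \<le> c) \<Longrightarrow> surrogate r w lam z \<le> c"
  unfolding surrogate_def by (rule cSUP_least[OF Zset_ne[OF r_nonneg]])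

lemma surrogate_le: "0 \<le> lam \<Longrightarrow> surrogate r w lam z \<le> 1 + norm w * r"
  by (rule surrogate_leI) (rule surrogate_term_le)

lemma hinge_le_surrogate: "0 \<le> lam \<Longrightarrow> z \<in> Zset r \<Longrightarrow> hinge w z \<le> surrogate r w lam z"
  using surrogate_ge[of lam z z] by simp

lemma surrogate_antimono:
  assumes "0 \<le> lam" "lam \<le> lam'"
  shows "surrogate r w lam' z \<le> surrogate r w lam z"
proof (rule surrogate_leI)
  fix z' :: "(real^'n) \<times> real" assume "z' \<in> Zset r"
  have "hinge w z' - lam' * dZ z z' \<le> hinge w z' - lam * dZ z z'"
    using assms dZ_nonneg[of z z'] by (intro diff_left_mono mult_right_mono) auto
  also have "\<dots> \<le> surrogate r w lam z"
    using surrogate_ge assms \<open>z' \<in> Zset r\<close> by blast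
  finally show "hinge w z' - lam' * dZ z z' \<le> surrogate r w lam z" .
qed

lemma surrogate_le_add:
  assumes "z \<in> Zset r" "0 \<le> lam" "lam \<le> lam'"
  shows "surrogate r w lam z \<le> surrogate r w lam' z + (lam' - lam) * (2 * r + 1)"
proof (rule surrogate_leI)
  fix z' :: "(real^'n) \<times> real" assume "z' \<in> Zset r"
  have "hinge w z' - lam * dZ z z' = (hinge w z' - lam' * dZ z z') + (lam' - lam) * dZ z z'"
    by (simp add: algebra_simps)
  also have "\<dots> \<le> surrogate r w lam' z + (lam' - lam) * (2 * r + 1)"
    using assms \<open>z' \<in> Zset r\<close> by (intro add_mono surrogate_ge mult_left_mono dZ_le) auto
  finally show "hinge w z' - lam * dZ z z' \<le> surrogate r w lam' z + (lam' - lam) * (2 * r + 1)" .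
qed

lemma surrogate_fst_le:
  assumes "0 \<le> lam"
  shows "surrogate r w lam (x1, y) \<le> surrogate r w lam (x2, y) + lam * dist x1 x2"
proof (rule surrogate_leI)
  fix z' :: "(real^'n) \<times> real" assume "z' \<in> Zset r"
  have "hinge w z' - lam * dZ (x1, y) z' \<le> hinge w z' - lam * dZ (x2, y) z' + lam * dist x1 x2"
    using mult_left_mono[OF dZ_fst_triangle[of x2 y z' x1] assms] by (simp add: algebra_simps)
  also have "\<dots> \<le> surrogate r w lam (x2, y) + lam * dist x1 x2"
    using assms \<open>z' \<in> Zset r\<close> by (intro add_mono surrogate_ge) auto
  finally show "hinge w z' - lam * dZ (x1, y) z' \<le> surrogate r w lam (x2, y) + lam * dist x1 x2" .
qed

lemma continuous_on_surrogate_fst: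
  assumes "0 \<le> lam"
  shows "continuous_on UNIV (\<lambda>x. surrogate r w lam (x, y))"
proof (rule lipschitz_on_continuous_on[OF lipschitz_onI])
  fix x1 x2 :: "real^'n"
  show "dist (surrogate r w lam (x1, y)) (surrogate r w lam (x2, y)) \<le> lam * dist x1 x2"
    using surrogate_fst_le[OF assms, of x1 y x2] surrogate_fst_le[OF assms, of x2 y x1]
    by (simp add: dist_real_def dist_commute abs_le_iff)
qed (use assms in simp)

lemma surrogate_off_labels:
  assumes "y \<notin> {-1, 1}"
  shows "surrogate r w lam (x, y) = surrogate r w lam (x, 0)"
proof -
  have "dZ (x, y) z' = dZ (x, 0) z'" if "z' \<in> Zset r" for z'
    using that assms by (cases z') (auto simp: dZ_def)
  then show ?thesis
    unfolding surrogate_def by (intro SUP_cong) simp_all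
qed

text \<open>The surrogate is continuous in \<open>x\<close> and depends on the label only through whether it is
  \<open>1\<close>, \<open>-1\<close> or neither.\<close>

lemma borel_measurable_surrogate:
  assumes "0 \<le> lam"
  shows "surrogate r w lam \<in> borel_measurable borel"
proof -
  let ?s = "\<lambda>c z. surrogate r w lam (fst z, c)"
  have slice: "?s c \<in> borel_measurable borel" for c
    by (intro borel_measurable_continuous_onI continuous_on_compose2[OF continuous_on_surrogate_fst]
        continuous_intros) (use assms in auto)
  have label: "{z \<in> space borel. snd z = c} \<in> sets borel" for c :: real
    by (auto intro!: borel_closed closed_Collect_eq continuous_intros)
  have "surrogate r w lam =
      (\<lambda>z. if snd z = 1 then ?s 1 z else if snd z = -1 then ?s (-1) z else ?s 0 z)"
  proof (rule ext)
    fix z :: "(real^'n) \<times> real"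
    obtain x y where "z = (x, y)"
      by (cases z)
    then show "surrogate r w lam z =
        (if snd z = 1 then ?s 1 z else if snd z = -1 then ?s (-1) z else ?s 0 z)"
      by (simp add: surrogate_off_labels[where x = x and y = y])
  qed
  also have "\<dots> \<in> borel_measurable borel"
    by (intro measurable_If slice label)
  finally show ?thesis .
qed

lemma surrogate_eq_hinge:
  assumes z: "(x, y) \<in> Zset r" and "norm w \<le> lam" and margin: "2 * y * (w \<bullet> x) \<le> lam"
  shows "surrogate r w lam (x, y) = hinge w (x, y)"
proof (rule antisym)
  have lam: "0 \<le> lam"
    using assms(2) norm_ge_zero[of w] by linarith
  show "hinge w (x, y) \<le> surrogate r w lam (x, y)"
    by (rule hinge_le_surrogate[OF lam z])
  show "surrogate r w lam (x, y) \<le> hinge w (x, y)"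
  proof (rule surrogate_leI)
    fix z' :: "(real^'n) \<times> real" assume "z' \<in> Zset r"
    then obtain x' y' where z': "z' = (x', y')" "y' \<in> {-1, 1}"
      by (cases z') auto
    have y: "y \<in> {-1, 1}" "\<bar>y'\<bar> = 1"
      using z z' by auto
    have "hinge w (x', y') \<le> hinge w (x, y') + norm w * norm (x - x')"
      by (rule hinge_fst_le[OF y(2)])
    also have "\<dots> \<le> hinge w (x, y) + (if y \<noteq> y' then lam else 0) + lam * norm (x - x')"
      using hinge_snd_le[OF y(1) z'(2) margin lam]
        mult_right_mono[OF assms(2) norm_ge_zero[of "x - x'"]]
      by linarith
    also have "\<dots> = hinge w (x, y) + lam * dZ (x, y) z'"
      by (simp add: dZ_def z'(1) algebra_simps)
    finally show "hinge w z' - lam * dZ (x, y) z' \<le> hinge w (x, y)"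
      by (simp add: z'(1))
  qed
qed

lemma psi_eq_emp_mean:
  assumes "0 \<le> lam"
  shows "psi r w n zs lam = emp_mean n zs (\<lambda>z. surrogate r w lam z - hinge w z)"
proof -
  have "(SUP z'\<in>Zset r. hinge w z' - lam * dZ z z' - hinge w z)
      = (SUP z'\<in>Zset r. - hinge w z + (hinge w z' - lam * dZ z z'))" for z
    by simp
  also have "\<dots> z = surrogate r w lam z - hinge w z" for z
    unfolding surrogate_def
    by (subst Sup_add_eq[OF bdd_above_surrogate[OF assms] Zset_ne[OF r_nonneg]]) simp
  finally show ?thesis
    unfolding psi_def by simp
qed

lemma psi_eq_0_iff:
  assumes "0 < n" "\<forall>i<n. zs i \<in> Zset r" "0 \<le> lam"
  shows "psi r w n zs lam = 0 \<longleftrightarrow> surrogate_exact r w n zs lam"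
proof -
  have "psi r w n zs lam = 0 \<longleftrightarrow> (\<Sum>i<n. surrogate r w lam (zs i) - hinge w (zs i)) = 0"
    using assms(1) by (simp add: psi_eq_emp_mean[OF assms(3)] emp_mean_def)
  also have "\<dots> \<longleftrightarrow> (\<forall>i\<in>{..<n}. surrogate r w lam (zs i) - hinge w (zs i) = 0)"
    using hinge_le_surrogate[OF assms(3)] assms(2) by (intro sum_nonneg_eq_0_iff) auto
  finally show ?thesis
    unfolding surrogate_exact_def by auto
qed

lemma surrogate_exact_mono:
  assumes "\<forall>i<n. zs i \<in> Zset r" "0 \<le> lam" "lam \<le> lam'" "surrogate_exact r w n zs lam"
  shows "surrogate_exact r w n zs lam'"
  unfolding surrogate_exact_def
proof (intro allI impI antisym)
  fix i assume "i < n"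
  show "surrogate r w lam' (zs i) \<le> hinge w (zs i)"
    using surrogate_antimono[OF assms(2,3)] assms(4) \<open>i < n\<close> unfolding surrogate_exact_def by metis
  show "hinge w (zs i) \<le> surrogate r w lam' (zs i)"
    using assms \<open>i < n\<close> by (intro hinge_le_surrogate) auto
qed

lemma surrogate_exact_if_margins_le:
  assumes "\<forall>i<n. zs i \<in> Zset r" "norm w \<le> lam"
    and "\<And>i. i < n \<Longrightarrow> 2 * snd (zs i) * (w \<bullet> fst (zs i)) \<le> lam"
  shows "surrogate_exact r w n zs lam"
  unfolding surrogate_exact_def
proof (intro allI impI)
  fix i assume "i < n"
  then show "surrogate r w lam (zs i) = hinge w (zs i)"
    using surrogate_eq_hinge[of "fst (zs i)" "snd (zs i)" lam] assms by simp
qed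

lemma surrogate_exact_max:
  assumes zs_in: "\<forall>i<n. zs i \<in> Zset r"
  shows "surrogate_exact r w n zs (max (2 * norm w * r) (norm w))"
proof (rule surrogate_exact_if_margins_le[OF zs_in])
  fix i assume "i < n"
  then have "\<bar>snd (zs i) * (w \<bullet> fst (zs i))\<bar> \<le> norm w * r"
    using abs_margin_le[of "fst (zs i)" "snd (zs i)" r w] zs_in by simp
  then show "2 * snd (zs i) * (w \<bullet> fst (zs i)) \<le> max (2 * norm w * r) (norm w)"
    by (auto simp: abs_le_iff le_max_iff_disj)
qed simp

context
  fixes n :: nat and zs :: "nat \<Rightarrow> (real^'n) \<times> real"
  assumes n_pos: "0 < n" and zs_in: "\<forall>i<n. zs i \<in> Zset r"
begin

lemma lam_plus_le: "0 \<le> lam \<Longrightarrow> surrogate_exact r w n zs lam \<Longrightarrow> lam_plus r w n zs \<le> lam"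
  unfolding lam_plus_def
  by (rule cInf_lower) (auto simp: psi_eq_0_iff[OF n_pos zs_in] bdd_below_def)

lemma lam_plus_le_max: "lam_plus r w n zs \<le> max (2 * norm w * r) (norm w)"
  by (rule lam_plus_le[OF _ surrogate_exact_max[OF zs_in]]) (simp add: le_max_iff_disj)

lemma lam_plus_le_Max:
  "lam_plus r w n zs \<le> Max ({2 * snd (zs i) * (w \<bullet> fst (zs i)) | i. i < n} \<union> {norm w})"
  (is "_ \<le> Max ?S")
proof (rule lam_plus_le)
  have "finite ?S"
    by simp
  then have "norm w \<le> Max ?S" "\<And>i. i < n \<Longrightarrow> 2 * snd (zs i) * (w \<bullet> fst (zs i)) \<le> Max ?S"
    by (auto intro: Max_ge)
  then show "0 \<le> Max ?S" "surrogate_exact r w n zs (Max ?S)"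
    using norm_ge_zero[of w] surrogate_exact_if_margins_le[OF zs_in] by (linarith, blast)
qed

lemma psi_zero_set_ne: "{lam. 0 \<le> lam \<and> psi r w n zs lam = 0} \<noteq> {}"
proof -
  have "0 \<le> max (2 * norm w * r) (norm w)"
    by (simp add: le_max_iff_disj)
  then show ?thesis
    using surrogate_exact_max[OF zs_in] psi_eq_0_iff[OF n_pos zs_in] by blast
qed

lemma lam_plus_nonneg: "0 \<le> lam_plus r w n zs"
  unfolding lam_plus_def by (rule cInf_greatest[OF psi_zero_set_ne]) simp

lemma surrogate_exact_above_lam_plus:
  assumes "lam_plus r w n zs < lam"
  shows "surrogate_exact r w n zs lam"
proof -
  obtain l where "0 \<le> l" "psi r w n zs l = 0" "l < lam"
    using cInf_lessD[OF psi_zero_set_ne] assms unfolding lam_plus_def by blast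
  then show ?thesis
    using psi_eq_0_iff[OF n_pos zs_in] surrogate_exact_mono[OF zs_in] by auto
qed

end

end

lemma norm_le_epsB: "bounded B \<Longrightarrow> v \<in> B \<Longrightarrow> norm v \<le> epsB B"
  unfolding epsB_def by (rule cSUP_upper) (auto simp: bounded_iff bdd_above_def)

lemma epsB_nonneg: "B \<noteq> {} \<Longrightarrow> bounded B \<Longrightarrow> 0 \<le> epsB B"
  using norm_le_epsB norm_ge_zero by (meson ex_in_conv order_trans)

context
  fixes P :: "'a measure"
  assumes prob_space_P: "prob_space P"
begin

lemma measurable_PiM_component: "i < n \<Longrightarrow> (\<lambda>zs. zs i) \<in> measurable (PiM {..<n} (\<lambda>_. P)) P"
  using measurable_component_singleton[of i "{..<n}" "\<lambda>_. P"] by simp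

lemma measure_PiM_PiE_power:
  assumes "Q \<in> sets P"
  shows "measure (PiM {..<n} (\<lambda>_. P)) (PiE {..<n} (\<lambda>_. Q)) = measure P Q ^ n"
proof -
  have "product_sigma_finite (\<lambda>_. P)"
    using product_prob_spaceI[OF prob_space_P] unfolding product_prob_space_def by blast
  then have "emeasure (PiM {..<n} (\<lambda>_. P)) (PiE {..<n} (\<lambda>_. Q)) = (\<Prod>i<n. emeasure P Q)"
    using assms by (intro product_sigma_finite.emeasure_PiM) auto
  also have "\<dots> = ennreal (measure P Q) ^ n"
    using finite_measure.emeasure_eq_measure[OF prob_space.finite_measure[OF prob_space_P]] by simp
  also have "\<dots> = ennreal (measure P Q ^ n)"
    by (simp add: ennreal_power)
  finally show ?thesis
    by (simp add: measure_def)
qed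

lemma measure_PiM_PiE_le_exp:
  assumes "Q \<in> sets P" "measure P Q \<le> 1 - t"
  shows "measure (PiM {..<n} (\<lambda>_. P)) (PiE {..<n} (\<lambda>_. Q)) \<le> exp (- real n * t)"
proof -
  have "0 \<le> 1 - t"
    using assms(2) measure_nonneg[of P Q] by linarith
  have "measure P Q ^ n \<le> (1 - t) ^ n"
    using assms(2) by (intro power_mono) auto
  also have "\<dots> \<le> exp (- t) ^ n"
    using \<open>0 \<le> 1 - t\<close> exp_ge_add_one_self[of "- t"] by (intro power_mono) auto
  also have "\<dots> = exp (- real n * t)"
    by (simp add: exp_of_nat_mult[symmetric])
  finally show ?thesis
    by (simp add: measure_PiM_PiE_power[OF assms(1)])
qed

lemma indep_vars_PiM_components:
  assumes "0 < n"
  shows "prob_space.indep_vars (PiM {..<n} (\<lambda>_. P)) (\<lambda>_. P) (\<lambda>i zs. zs i) {..<n}"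
proof -
  let ?M = "PiM {..<n} (\<lambda>_. P)"
  interpret M: prob_space ?M
    by (rule prob_space_PiM[OF prob_space_P])
  have "distr ?M ?M (\<lambda>zs. \<lambda>i\<in>{..<n}. zs i) = distr ?M ?M (\<lambda>zs. zs)"
    by (rule distr_cong) (auto simp: space_PiM PiE_restrict)
  also have "\<dots> = PiM {..<n} (\<lambda>i. distr ?M P (\<lambda>zs. zs i))"
    by (auto simp: distr_PiM_component[OF prob_space_P] intro: PiM_cong)
  finally show ?thesis
    using assms by (subst M.indep_vars_iff_distr_eq_PiM') auto
qed

lemma borel_measurable_emp_mean:
  assumes "h \<in> borel_measurable P"
  shows "(\<lambda>zs. emp_mean n zs h) \<in> borel_measurable (PiM {..<n} (\<lambda>_. P))"
  unfolding emp_mean_def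
  by (intro borel_measurable_divide borel_measurable_sum
      measurable_compose[OF measurable_PiM_component assms]) auto

lemma hoeffding_emp_mean:
  fixes h :: "'a \<Rightarrow> real"
  assumes n: "0 < n" and h: "h \<in> borel_measurable P" "\<And>z. a \<le> h z \<and> h z \<le> b"
    and "a < b" "0 \<le> t"
  shows "measure (PiM {..<n} (\<lambda>_. P))
      {zs \<in> space (PiM {..<n} (\<lambda>_. P)). emp_mean n zs h \<le> (\<integral>z. h z \<partial>P) - t}
    \<le> exp (- 2 * real n * t\<^sup>2 / (b - a)\<^sup>2)"
proof -
  let ?M = "PiM {..<n} (\<lambda>_. P)"
  interpret M: prob_space ?M
    by (rule prob_space_PiM[OF prob_space_P])
  define X where "X = (\<lambda>i (zs :: nat \<Rightarrow> 'a). h (zs i))"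
  have "0 \<in> {..<n}"
    using n by simp
  have distr_X: "distr ?M borel (X i) = distr P borel h" if "i \<in> {..<n}" for i
    using that h(1) unfolding X_def
    by (subst distr_distr[symmetric, unfolded comp_def])
      (auto simp: distr_PiM_component[OF prob_space_P])
  have "(\<integral>z. h z \<partial>P) = (\<integral>z. h z \<partial>(distr ?M P (\<lambda>zs. zs 0)))"
    by (simp add: distr_PiM_component[OF prob_space_P \<open>0 \<in> {..<n}\<close>])
  also have "\<dots> = M.expectation (X 0)"
    unfolding X_def by (rule integral_distr[OF measurable_PiM_component[OF n] h(1)])
  finally have expectation: "M.expectation (X 0) = (\<integral>z. h z \<partial>P)" ..
  interpret Hoeffding_ineq_iid ?M "{..<n}" X "X 0" a b "M.expectation (X 0)"
  proof unfold_locales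
    show "M.indep_vars (\<lambda>_. borel) X {..<n}"
      unfolding X_def
      by (rule M.indep_vars_compose2[OF indep_vars_PiM_components[OF n]]) (use h in simp)
    show "distr ?M borel (X i) = distr ?M borel (X 0)" if "i \<in> {..<n}" for i
      using distr_X[OF that] distr_X[OF \<open>0 \<in> {..<n}\<close>] by simp
  qed (use h n measurable_compose[OF measurable_PiM_component[OF n] h(1)] in \<open>auto simp: X_def\<close>)
  have "M.prob {zs \<in> space ?M. (\<Sum>i\<in>{..<n}. X i zs) / real (card {..<n})
      \<le> M.expectation (X 0) - t} \<le> exp (- 2 * real (card {..<n}) * t\<^sup>2 / (b - a)\<^sup>2)"
    by (rule Hoeffding_ineq_le'[OF assms(5,4)]) (use n in auto)
  then show ?thesis
    using expectation by (simp add: emp_mean_def X_def)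
qed

end

lemma (in prob_space) prob_Diff_Un_ge:
  assumes "E \<in> events" "T \<in> events" "U \<in> events" "prob E = 1" "prob T \<le> a" "prob U \<le> b"
  shows "1 - (a + b) \<le> prob (E - (T \<union> U))"
proof -
  have "prob (E \<inter> (T \<union> U)) \<le> prob T + prob U"
    using assms(2,3) by (intro order_trans[OF finite_measure_mono measure_Un_le]) auto
  then show ?thesis
    using finite_measure_Diff'[OF assms(1) sets.Un[OF assms(2,3)]] assms(4-6) by linarith
qed

lemma ln_add_3_le: 
  assumes "0 \<le> x"
  shows "ln (x + 3) \<le> 2 * sqrt x + 2"
proof -
  have "sqrt (x + 3) \<le> sqrt x + 2"
    using assms by (intro real_le_lsqrt) (auto simp: power2_eq_square algebra_simps)
  have "ln (x + 3) = 2 * ln (sqrt (x + 3))"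
    using assms by (simp add: ln_sqrt)
  also have "\<dots> \<le> 2 * (sqrt (x + 3) - 1)"
    using assms ln_le_minus_one[of "sqrt (x + 3)"] by simp
  also have "\<dots> \<le> 2 * sqrt x + 2"
    using \<open>sqrt (x + 3) \<le> sqrt x + 2\<close> by simp
  finally show ?thesis .
qed

lemma sqrt_ln_slack:
  assumes "0 \<le> L" "0 \<le> K" "K \<le> L + 2"
  shows "sqrt ((L + ln 2 + ln (K + 1)) / 2) + 1 \<le> sqrt (L / 2) + 72"
proof -
  define s where "s = sqrt (L / 2)"
  have "0 \<le> s" "s * s = L / 2" "sqrt L = sqrt 2 * s"
    using assms by (simp_all add: s_def real_sqrt_divide)
  moreover have "sqrt 2 \<le> (2 :: real)"
    by (rule real_le_lsqrt) simp_all
  ultimately have "sqrt L \<le> 2 * s"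
    by (simp add: mult_right_mono)
  have "ln 2 \<le> (1 :: real)"
    using ln_le_minus_one[of 2] by simp
  have "ln (K + 1) \<le> ln (L + 3)"
    using assms by simp
  also have "\<dots> \<le> 2 * sqrt L + 2"
    by (rule ln_add_3_le[OF assms(1)])
  finally have "ln (K + 1) \<le> 2 * sqrt L + 2" .
  moreover have "(s + 71)\<^sup>2 = s * s + 142 * s + 5041"
    by (simp add: power2_eq_square algebra_simps)
  ultimately have "L + ln 2 + ln (K + 1) \<le> 2 * (s + 71)\<^sup>2"
    using \<open>ln 2 \<le> 1\<close> \<open>sqrt L \<le> 2 * s\<close> \<open>0 \<le> s\<close> \<open>s * s = L / 2\<close> by linarith
  then have "(L + ln 2 + ln (K + 1)) / 2 \<le> (s + 71)\<^sup>2"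
    by simp
  then have "sqrt ((L + ln 2 + ln (K + 1)) / 2) \<le> s + 71"
    using \<open>0 \<le> s\<close> by (intro real_le_lsqrt) simp_all
  then show ?thesis
    unfolding s_def by simp
qed

lemma real_nat_ceiling_divide_le:
  assumes "0 \<le> a" "1 \<le> s"
  shows "real (nat \<lceil>a / s\<rceil>) \<le> a + 1"
proof -
  have "real (nat \<lceil>a / s\<rceil>) = of_int \<lceil>a / s\<rceil>"
    using assms by simp
  also have "\<dots> \<le> a / s + 1"
    by simp
  also have "a / s \<le> a"
    using assms by (simp add: divide_le_eq mult_le_cancel_left1)
  finally show ?thesis
    by simp
qed

text \<open>\<open>K\<close> is the least number of grid levels for which the top event has probability
  \<open>exp(-K\<surd>n) \<le> \<delta>/2\<close>; each of the \<open>K + 1\<close> Hoeffding bounds is then taken at confidence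
  \<open>\<delta>/(2(K + 1))\<close>.\<close>

lemma grid_size:
  fixes \<delta> :: real and n :: nat
  assumes "0 < \<delta>" "\<delta> < 1" "0 < n"
  defines "L \<equiv> ln (1 / \<delta>)"
  defines "K \<equiv> nat \<lceil>(L + ln 2) / sqrt n\<rceil>"
  shows "exp (- real n * (real K / sqrt n)) \<le> \<delta> / 2"
    and "(real K + 1) * exp (- (L + ln 2 + ln (real K + 1))) = \<delta> / 2"
    and "sqrt ((L + ln 2 + ln (real K + 1)) / (2 * real n)) + 1 / sqrt n
      \<le> sqrt (L / (2 * real n)) + 72 / sqrt n"
proof -
  have L: "0 < L" "exp (- L) = \<delta>"
    using assms(1,2) by (simp_all add: L_def ln_div)
  have s: "1 \<le> sqrt n"
    using assms(3) by simp
  have "0 \<le> L + ln 2"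
    using L(1) by simp
  have K_ge: "(L + ln 2) / sqrt n \<le> real K"
    unfolding K_def by (rule real_nat_ceiling_ge)
  show "exp (- real n * (real K / sqrt n)) \<le> \<delta> / 2"
  proof -
    have "real n * (real K / sqrt n) = real K * (real n / sqrt n)"
      by simp
    also have "\<dots> = real K * sqrt n"
      by (simp add: real_div_sqrt)
    finally have "L + ln 2 \<le> real n * (real K / sqrt n)"
      using K_ge s by (simp add: divide_le_eq)
    then have "exp (- real n * (real K / sqrt n)) \<le> exp (- L) * exp (- ln 2)"
      by (simp flip: exp_add)
    then show ?thesis
      using L by (simp add: exp_minus)
  qed
  have "exp (- (L + ln 2 + ln (real K + 1))) = exp (- L) * exp (- ln 2) * exp (- ln (real K + 1))"
    by (simp flip: exp_add)
  also have "\<dots> = \<delta> * exp (- ln 2) * exp (- ln (real K + 1))"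
    by (simp only: L(2))
  also have "\<dots> = \<delta> / (2 * (real K + 1))"
    by (simp add: exp_minus field_simps)
  finally show "(real K + 1) * exp (- (L + ln 2 + ln (real K + 1))) = \<delta> / 2"
    by (simp add: field_simps)
  have "real K \<le> L + 2"
    using real_nat_ceiling_divide_le[OF \<open>0 \<le> L + ln 2\<close> s] ln_le_minus_one[of 2]
    unfolding K_def by simp
  define X where "X = L + ln 2 + ln (real K + 1)"
  have "sqrt (X / 2) + 1 \<le> sqrt (L / 2) + 72"
    unfolding X_def using L(1) \<open>real K \<le> L + 2\<close> by (intro sqrt_ln_slack) simp_all
  then have "(sqrt (X / 2) + 1) / sqrt n \<le> (sqrt (L / 2) + 72) / sqrt n"
    using s by (intro divide_right_mono) simp_all
  moreover have "sqrt (x / (2 * real n)) = sqrt (x / 2) / sqrt n" for x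
    by (simp add: real_sqrt_divide real_sqrt_mult)
  ultimately show "sqrt ((L + ln 2 + ln (real K + 1)) / (2 * real n)) + 1 / sqrt n
      \<le> sqrt (L / (2 * real n)) + 72 / sqrt n"
    unfolding X_def[symmetric] by (simp add: add_divide_distrib)
qed

text \<open>The grid point whose level lies just below \<open>m lp\<close> lies to the right of \<open>lp\<close>, where
  \<open>E = e\<close>.\<close>

lemma level_grid_bound:
  fixes m E :: "real \<Rightarrow> real" and g :: "nat \<Rightarrow> real"
  assumes antimono: "\<And>a b. 0 \<le> a \<Longrightarrow> a \<le> b \<Longrightarrow> m b \<le> m a"
    and "0 \<le> lp" "0 < eps"
    and top: "m lp \<le> m (g K) + real K * eps"
    and grid: "\<And>j. j < K \<Longrightarrow> 0 \<le> g j"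
      "\<And>j. j < K \<Longrightarrow> m (g K) + real j * eps \<le> m 0 \<Longrightarrow> m (g j) = m (g K) + real j * eps"
    and deviation: "\<And>j. j \<le> K \<Longrightarrow> m (g j) < E (g j) + d"
    and exact: "\<And>l. lp < l \<Longrightarrow> E l = e" "E (g K) = e"
  shows "m lp \<le> e + d + eps"
proof (cases "m lp \<le> m (g K)")
  case True
  then show ?thesis
    using deviation[of K] exact(2) \<open>0 < eps\<close> by simp
next
  case False
  define x where "x = (m lp - m (g K)) / eps"
  define j where "j = nat (\<lceil>x\<rceil> - 1)"
  have "0 < x" "x \<le> real K"
    using False top \<open>0 < eps\<close> by (auto simp: x_def field_simps)
  then have "real j = of_int \<lceil>x\<rceil> - 1"
    by (simp add: j_def)
  then have j: "real j < x" "x \<le> real j + 1" "j < K"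
    using ceiling_correct[of x] \<open>x \<le> real K\<close> by linarith+
  have below: "m (g K) + real j * eps < m lp"
    using j(1) \<open>0 < eps\<close> by (simp add: x_def field_simps)
  moreover have "m lp \<le> m 0"
    by (rule antimono[OF order_refl \<open>0 \<le> lp\<close>])
  ultimately have level: "m (g j) = m (g K) + real j * eps"
    using grid(2)[OF j(3)] by linarith
  have "lp < g j"
  proof (rule ccontr)
    assume "\<not> lp < g j"
    then have "m lp \<le> m (g j)"
      using antimono grid(1)[OF j(3)] by simp
    then show False
      using below level by linarith
  qed
  have "m lp \<le> m (g j) + eps"
    using j(2) \<open>0 < eps\<close> level by (simp add: x_def field_simps)
  also have "\<dots> < E (g j) + d + eps"
    using deviation[of j] j(3) by simp
  finally show ?thesis
    using exact(1)[OF \<open>lp < g j\<close>] by simp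
qed

locale hinge_risk =
  fixes r Lam :: real and w :: "real^'n" and P :: "((real^'n) \<times> real) measure"
  assumes r_pos: "0 < r" and Lam_pos: "0 < Lam" and norm_w_le: "norm w \<le> Lam"
    and prob_space_P: "prob_space P" and sets_P: "sets P = sets borel"
    and measure_Zset: "measure P (Zset r) = 1"
begin

sublocale P: prob_space P
  by (rule prob_space_P)

definition hinge_lo :: real where "hinge_lo = max 0 (1 - Lam * r)"

definition hinge_hi :: real where "hinge_hi = 1 + Lam * r"

definition lam_max :: real where "lam_max = max (2 * Lam * r) Lam"

text \<open>Off \<open>Zset r\<close>, a \<open>P\<close>-null set, the surrogate is unbounded below; clipping it at the lower
  end of the range of the loss makes it bounded without changing it on \<open>Zset r\<close>.\<close>

definition clipped_surrogate :: "real \<Rightarrow> (real^'n) \<times> real \<Rightarrow> real" where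
  "clipped_surrogate lam z = max hinge_lo (surrogate r w lam z)"

definition dual_risk :: "real \<Rightarrow> real" where
  "dual_risk lam = (\<integral>z. clipped_surrogate lam z \<partial>P)"

lemma hinge_range_width:
  "0 \<le> hinge_lo" "0 < hinge_hi - hinge_lo"
  "hinge_hi - hinge_lo \<le> 2 * Lam * r" "hinge_hi - hinge_lo \<le> 1 + Lam * r"
  using r_pos Lam_pos unfolding hinge_lo_def hinge_hi_def by (auto simp: max_def)

lemma r_nonneg: "0 \<le> r"
  using r_pos by simp

lemma lam_max_nonneg: "0 \<le> lam_max"
  using Lam_pos by (simp add: lam_max_def le_max_iff_disj)

lemma norm_w_mult_r_le: "norm w * r \<le> Lam * r"
  using norm_w_le r_pos by (simp add: mult_right_mono)

lemma hinge_lo_le_hinge: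
  assumes "z \<in> Zset r"
  shows "hinge_lo \<le> hinge w z"
proof -
  have "hinge_lo \<le> max 0 (1 - norm w * r)"
    unfolding hinge_lo_def using norm_w_mult_r_le by (intro max.mono) auto
  then show ?thesis
    using hinge_bounds(1)[OF assms, of w] by linarith
qed

lemma surrogate_le_hinge_hi: "0 \<le> lam \<Longrightarrow> surrogate r w lam z \<le> hinge_hi"
  using surrogate_le[OF r_nonneg, of lam w z] norm_w_mult_r_le unfolding hinge_hi_def by linarith

lemma clipped_surrogate_range:
  assumes "0 \<le> lam"
  shows "hinge_lo \<le> clipped_surrogate lam z \<and> clipped_surrogate lam z \<le> hinge_hi"
  using surrogate_le_hinge_hi[OF assms] hinge_range_width unfolding clipped_surrogate_def by auto

lemma clipped_surrogate_nonneg: "0 \<le> clipped_surrogate lam z"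
  using hinge_range_width(1) unfolding clipped_surrogate_def by simp

lemma clipped_surrogate_eq:
  "0 \<le> lam \<Longrightarrow> z \<in> Zset r \<Longrightarrow> clipped_surrogate lam z = surrogate r w lam z"
  using hinge_le_surrogate[of r lam z w] hinge_lo_le_hinge[of z] r_pos
  unfolding clipped_surrogate_def by auto

lemma sets_Zset: "Zset r \<in> sets P"
  using sets_P borel_closed[OF closed_Zset] by simp

lemma space_P: "space P = UNIV"
  using sets_eq_imp_space_eq[OF sets_P] by simp

lemma AE_Zset: "AE z in P. z \<in> Zset r"
  using P.AE_in_set_eq_1[OF sets_Zset] measure_Zset by simp

lemma borel_measurable_P: "borel_measurable P = borel_measurable borel"
  by (rule measurable_cong_sets[OF sets_P refl])

lemma borel_measurable_clipped_surrogate: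
  "0 \<le> lam \<Longrightarrow> clipped_surrogate lam \<in> borel_measurable P"
  unfolding borel_measurable_P clipped_surrogate_def[abs_def]
  using r_pos by (intro borel_measurable_max borel_measurable_const borel_measurable_surrogate) auto

lemma integrable_clipped_surrogate:
  assumes "0 \<le> lam"
  shows "integrable P (clipped_surrogate lam)"
proof (rule P.integrable_const_bound[OF AE_I2 borel_measurable_clipped_surrogate[OF assms]])
  fix z
  show "norm (clipped_surrogate lam z) \<le> hinge_hi"
    using clipped_surrogate_range[OF assms, of z] hinge_range_width(1) by auto
qed

lemma dual_risk_nonneg: "0 \<le> dual_risk lam"
  unfolding dual_risk_def by (intro integral_nonneg_AE AE_I2 clipped_surrogate_nonneg)

lemma dual_risk_antimono:
  assumes "0 \<le> lam" "lam \<le> lam'"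
  shows "dual_risk lam' \<le> dual_risk lam"
  unfolding dual_risk_def
proof (rule integral_mono)
  show "clipped_surrogate lam' z \<le> clipped_surrogate lam z" for z
    unfolding clipped_surrogate_def
    using surrogate_antimono[OF r_nonneg assms] by (rule max.mono[OF order_refl])
qed (use assms integrable_clipped_surrogate in auto)

lemma dual_risk_le_add:
  assumes "0 \<le> lam" "lam \<le> lam'"
  shows "dual_risk lam \<le> dual_risk lam' + (lam' - lam) * (2 * r + 1)"
proof -
  have "dual_risk lam \<le> (\<integral>z. clipped_surrogate lam' z + (lam' - lam) * (2 * r + 1) \<partial>P)"
    unfolding dual_risk_def
  proof (rule integral_mono_AE)
    show "AE z in P.
        clipped_surrogate lam z \<le> clipped_surrogate lam' z + (lam' - lam) * (2 * r + 1)"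
      using AE_Zset
    proof eventually_elim
      case (elim z)
      then show ?case
        using surrogate_le_add[of r z lam lam' w] assms r_pos
        by (simp add: clipped_surrogate_eq)
    qed
  qed (use assms integrable_clipped_surrogate in auto)
  then show ?thesis
    using assms integrable_clipped_surrogate[of lam'] by (simp add: dual_risk_def P.prob_space)
qed

lemma continuous_on_dual_risk: "continuous_on {0..} dual_risk"
proof (rule lipschitz_on_continuous_on[OF lipschitz_onI])
  have le: "dist (dual_risk a) (dual_risk b) \<le> (2 * r + 1) * dist a b" if "0 \<le> a" "a \<le> b" for a b
    using dual_risk_antimono[OF that] dual_risk_le_add[OF that] that
    by (simp add: dist_real_def abs_le_iff algebra_simps)
  fix x y :: real
  assume "x \<in> {0..}" "y \<in> {0..}"
  then show "dist (dual_risk x) (dual_risk y) \<le> (2 * r + 1) * dist x y"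
    using le[of x y] le[of y x] by (cases "x \<le> y") (auto simp: dist_commute)
qed (use r_pos in simp)

lemma dual_risk_level:
  assumes "dual_risk lam_max \<le> y" "y \<le> dual_risk 0"
  shows "\<exists>l. 0 \<le> l \<and> l \<le> lam_max \<and> dual_risk l = y"
  using IVT2'[OF assms lam_max_nonneg] continuous_on_subset[OF continuous_on_dual_risk] by auto

lemma surrogate_exact_lam_max:
  assumes "\<forall>i<n. zs i \<in> Zset r"
  shows "surrogate_exact r w n zs lam_max"
proof (rule surrogate_exact_mono[OF r_nonneg assms _ _ surrogate_exact_max[OF r_nonneg assms]])
  show "max (2 * norm w * r) (norm w) \<le> lam_max"
    unfolding lam_max_def using norm_w_le norm_w_mult_r_le by (intro max.mono) auto
qed (simp add: le_max_iff_disj)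

lemma emp_mean_clipped_surrogate:
  assumes "0 \<le> lam" "\<forall>i<n. zs i \<in> Zset r" "surrogate_exact r w n zs lam"
  shows "emp_mean n zs (clipped_surrogate lam) = emp_mean n zs (hinge w)"
  using assms unfolding emp_mean_def surrogate_exact_def by (simp add: clipped_surrogate_eq)

lemma adv_risk_le_dual_risk:
  assumes B: "bounded B" "\<forall>x\<in>cball 0 r. Nbhd r B x \<noteq> {}" and "0 \<le> epsB B" "0 \<le> lam"
  shows "adv_risk P r B w \<le> lam * epsB B + dual_risk lam"
proof -
  let ?I = "\<lambda>z. SUP x'\<in>Nbhd r B (fst z). hinge w (x', snd z)"
  have pointwise: "?I z \<le> lam * epsB B + clipped_surrogate lam z" if Z: "z \<in> Zset r" for z
  proof -
    obtain x y where z: "z = (x, y)" "norm x \<le> r" "y = -1 \<or> y = 1"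
      using Z by (cases z) auto
    show ?thesis
      unfolding z(1) fst_conv snd_conv
    proof (rule cSUP_least)
      show "Nbhd r B x \<noteq> {}"
        using B(2) z(2) by simp
      fix x' assume "x' \<in> Nbhd r B x"
      then have x': "(x', y) \<in> Zset r" "norm (x - x') \<le> epsB B"
        using z norm_le_epsB[OF B(1)] by (auto simp: Nbhd_def norm_minus_commute)
      have "hinge w (x', y) - lam * epsB B \<le> hinge w (x', y) - lam * dZ (x, y) (x', y)"
        using x'(2) \<open>0 \<le> lam\<close> by (simp add: dZ_def mult_left_mono)
      also have "\<dots> \<le> clipped_surrogate lam (x, y)"
        using surrogate_ge[OF _ \<open>0 \<le> lam\<close> x'(1)] clipped_surrogate_eq[OF \<open>0 \<le> lam\<close> Z] r_pos z(1)
        by simp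
      finally show "hinge w (x', y) \<le> lam * epsB B + clipped_surrogate lam (x, y)"
        by simp
    qed
  qed
  show ?thesis
  proof (cases "integrable P ?I")
    case True
    have "adv_risk P r B w \<le> (\<integral>z. lam * epsB B + clipped_surrogate lam z \<partial>P)"
      unfolding adv_risk_def using AE_Zset pointwise
      by (intro integral_mono_AE True Bochner_Integration.integrable_add
          integrable_clipped_surrogate[OF \<open>0 \<le> lam\<close>]) (auto elim: AE_mp)
    then show ?thesis
      using integrable_clipped_surrogate[OF \<open>0 \<le> lam\<close>] by (simp add: dual_risk_def P.prob_space)
  next
    case False
    then show ?thesis
      using dual_risk_nonneg[of lam] assms(3,4)
      by (simp add: adv_risk_def not_integrable_integral_eq)
  qed
qed

lemma sets_surrogate_exact:
  assumes "0 \<le> lam"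
  shows "{z \<in> Zset r. surrogate r w lam z = hinge w z} \<in> sets P"
proof -
  have "surrogate r w lam \<in> borel_measurable P"
    unfolding borel_measurable_P using r_pos assms by (intro borel_measurable_surrogate) auto
  moreover have "hinge w \<in> borel_measurable P"
    unfolding borel_measurable_P hinge_def[abs_def]
    by (intro borel_measurable_continuous_onI continuous_intros)
  ultimately have "{z \<in> space P. surrogate r w lam z = hinge w z} \<in> sets P"
    by (rule borel_measurable_eq)
  then have "Zset r \<inter> {z \<in> space P. surrogate r w lam z = hinge w z} \<in> sets P"
    using sets_Zset by blast
  moreover have "Zset r \<inter> {z \<in> space P. surrogate r w lam z = hinge w z}
      = {z \<in> Zset r. surrogate r w lam z = hinge w z}"
    using space_P by auto
  ultimately show ?thesis
    by simp
qed

lemma dual_risk_gap_le: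
  assumes "0 \<le> lam"
  shows "dual_risk lam - dual_risk lam_max
    \<le> (hinge_hi - hinge_lo) * (1 - measure P {z \<in> Zset r. surrogate r w lam z = hinge w z})"
proof -
  let ?Q = "{z \<in> Zset r. surrogate r w lam z = hinge w z}"
  have "dual_risk lam - dual_risk lam_max
      = (\<integral>z. clipped_surrogate lam z - clipped_surrogate lam_max z \<partial>P)"
    unfolding dual_risk_def
    using integrable_clipped_surrogate[OF assms] integrable_clipped_surrogate[OF lam_max_nonneg]
    by simp
  also have "\<dots> \<le> (\<integral>z. (hinge_hi - hinge_lo) * indicator (space P - ?Q) z \<partial>P)"
  proof (rule integral_mono_AE)
    show "AE z in P. clipped_surrogate lam z - clipped_surrogate lam_max z
        \<le> (hinge_hi - hinge_lo) * indicator (space P - ?Q) z"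
      using AE_Zset
    proof eventually_elim
      case (elim z)
      have "surrogate r w lam_max z = hinge w z"
        using surrogate_exact_lam_max[of 1 "\<lambda>_. z"] elim unfolding surrogate_exact_def by simp
      then show ?case
        using clipped_surrogate_eq[OF assms elim] clipped_surrogate_eq[OF lam_max_nonneg elim]
          clipped_surrogate_range[OF assms, of z] clipped_surrogate_range[OF lam_max_nonneg, of z]
        by (auto simp: space_P split: split_indicator)
    qed
  qed (use assms lam_max_nonneg integrable_clipped_surrogate sets_surrogate_exact[OF assms]
         in \<open>auto simp: P.emeasure_eq_measure\<close>)
  also have "\<dots> = (hinge_hi - hinge_lo) * (1 - measure P ?Q)"
    using P.prob_compl[OF sets_surrogate_exact[OF assms]] sets_surrogate_exact[OF assms] by simp
  finally show ?thesis .
qed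

text \<open>The \<open>\<lambda>\<close> at which the dual risk exceeds its minimum by \<open>t\<close> times the range of the loss
  lies below \<open>\<lambda>\<^sup>+\<close> only if all samples fall where the surrogate at \<open>\<lambda>\<close> is exact, a set of
  measure at most \<open>1 - t\<close>.\<close>

lemma lam_plus_top_event:
  assumes "0 < n" "0 \<le> t"
  shows "\<exists>T\<in>sets (PiM {..<n} (\<lambda>_. P)). measure (PiM {..<n} (\<lambda>_. P)) T \<le> exp (- real n * t) \<and>
    (\<forall>zs\<in>PiE {..<n} (\<lambda>_. Zset r) - T.
      dual_risk (lam_plus r w n zs) \<le> dual_risk lam_max + t * (hinge_hi - hinge_lo))"
proof (cases "dual_risk lam_max + t * (hinge_hi - hinge_lo) \<le> dual_risk 0")
  case False
  have "dual_risk (lam_plus r w n zs) \<le> dual_risk 0" if "zs \<in> PiE {..<n} (\<lambda>_. Zset r)" for zs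
    using that lam_plus_nonneg[OF r_nonneg assms(1)] by (intro dual_risk_antimono) auto
  then show ?thesis
    using False by (intro bexI[of _ "{}"]) force+
next
  case True
  moreover have "dual_risk lam_max \<le> dual_risk lam_max + t * (hinge_hi - hinge_lo)"
    using assms(2) hinge_range_width(2) by simp
  ultimately obtain l where l: "0 \<le> l" "dual_risk l = dual_risk lam_max + t * (hinge_hi - hinge_lo)"
    using dual_risk_level by blast
  let ?Q = "{z \<in> Zset r. surrogate r w l z = hinge w z}"
  have "t * (hinge_hi - hinge_lo) \<le> (1 - measure P ?Q) * (hinge_hi - hinge_lo)"
    using dual_risk_gap_le[OF l(1)] l(2) by (simp add: mult.commute)
  then have "measure P ?Q \<le> 1 - t"
    using hinge_range_width(2) by simp
  show ?thesis
  proof (intro bexI[of _ "PiE {..<n} (\<lambda>_. ?Q)"] conjI ballI)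
    show "PiE {..<n} (\<lambda>_. ?Q) \<in> sets (PiM {..<n} (\<lambda>_. P))"
      using sets_surrogate_exact[OF l(1)] by (intro sets_PiM_I_finite) auto
    show "measure (PiM {..<n} (\<lambda>_. P)) (PiE {..<n} (\<lambda>_. ?Q)) \<le> exp (- real n * t)"
      by (rule measure_PiM_PiE_le_exp[OF prob_space_P sets_surrogate_exact[OF l(1)]]) fact
    fix zs assume zs: "zs \<in> PiE {..<n} (\<lambda>_. Zset r) - PiE {..<n} (\<lambda>_. ?Q)"
    then have zs_in: "\<forall>i<n. zs i \<in> Zset r"
      by auto
    have "l \<le> lam_plus r w n zs"
    proof (rule ccontr)
      assume "\<not> l \<le> lam_plus r w n zs"
      then have "surrogate_exact r w n zs l"
        by (intro surrogate_exact_above_lam_plus[OF r_nonneg assms(1) zs_in]) simp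
      then show False
        using zs unfolding surrogate_exact_def by (auto simp: PiE_iff)
    qed
    then show "dual_risk (lam_plus r w n zs) \<le> dual_risk lam_max + t * (hinge_hi - hinge_lo)"
      using dual_risk_antimono[OF l(1)] l(2) by simp
  qed
qed

lemma dual_risk_grid:
  assumes "0 \<le> eps"
  obtains g where "g K = lam_max" "\<And>j. 0 \<le> g j"
    "\<And>j. j < K \<Longrightarrow> dual_risk lam_max + real j * eps \<le> dual_risk 0 \<Longrightarrow>
      dual_risk (g j) = dual_risk lam_max + real j * eps"
proof -
  define c where "c j = min (dual_risk lam_max + real j * eps) (dual_risk 0)" for j
  have "dual_risk lam_max \<le> c j" "c j \<le> dual_risk 0" for j
    using dual_risk_antimono[OF order_refl lam_max_nonneg] assms by (simp_all add: c_def)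
  then have "\<forall>j. \<exists>l. 0 \<le> l \<and> dual_risk l = c j"
    using dual_risk_level by blast
  then obtain h where h: "\<And>j. 0 \<le> h j" "\<And>j. dual_risk (h j) = c j"
    by metis
  show ?thesis
    by (rule that[of "\<lambda>j. if j < K then h j else lam_max"]) (auto simp: h lam_max_nonneg c_def)
qed

lemma grid_deviation_event:
  fixes K :: nat
  assumes "0 < n" "\<And>j. 0 \<le> g j" "0 \<le> d"
  defines "U \<equiv> \<Union>j\<le>K. {zs \<in> space (PiM {..<n} (\<lambda>_. P)).
      emp_mean n zs (clipped_surrogate (g j)) \<le> dual_risk (g j) - d}"
  shows "U \<in> sets (PiM {..<n} (\<lambda>_. P))"
    and "measure (PiM {..<n} (\<lambda>_. P)) U
      \<le> (real K + 1) * exp (- 2 * real n * d\<^sup>2 / (hinge_hi - hinge_lo)\<^sup>2)"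
proof -
  let ?M = "PiM {..<n} (\<lambda>_. P)"
  let ?D = "\<lambda>j. {zs \<in> space ?M. emp_mean n zs (clipped_surrogate (g j)) \<le> dual_risk (g j) - d}"
  have D: "?D j \<in> sets ?M" for j
    by (intro borel_measurable_le borel_measurable_emp_mean[OF prob_space_P]
        borel_measurable_clipped_surrogate assms(2) borel_measurable_const)
  then show "U \<in> sets ?M"
    unfolding U_def by auto
  have "measure ?M U \<le> (\<Sum>j\<le>K. measure ?M (?D j))"
    unfolding U_def by (rule measure_UNION_le) (use D in auto)
  also have "\<dots> \<le> (\<Sum>j\<le>K. exp (- 2 * real n * d\<^sup>2 / (hinge_hi - hinge_lo)\<^sup>2))"
    unfolding dual_risk_def
    by (intro sum_mono hoeffding_emp_mean[OF prob_space_P assms(1)]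
        borel_measurable_clipped_surrogate clipped_surrogate_range assms(2,3))
      (use hinge_range_width(2) in simp)
  finally show "measure ?M U \<le> (real K + 1) * exp (- 2 * real n * d\<^sup>2 / (hinge_hi - hinge_lo)\<^sup>2)"
    by (simp add: add.commute)
qed

lemma dual_risk_lam_plus_le_grid:
  assumes "0 < n" "\<forall>i<n. zs i \<in> Zset r" "0 < eps"
    and g: "g K = lam_max" "\<And>j. 0 \<le> g j"
      "\<And>j. j < K \<Longrightarrow> dual_risk lam_max + real j * eps \<le> dual_risk 0 \<Longrightarrow>
        dual_risk (g j) = dual_risk lam_max + real j * eps"
    and top: "dual_risk (lam_plus r w n zs) \<le> dual_risk lam_max + real K * eps"
    and deviation: "\<And>j. j \<le> K \<Longrightarrow> dual_risk (g j) < emp_mean n zs (clipped_surrogate (g j)) + d"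
  shows "dual_risk (lam_plus r w n zs) \<le> emp_mean n zs (hinge w) + d + eps"
proof (rule level_grid_bound[where m = dual_risk and g = g and K = K and d = d and eps = eps
      and E = "\<lambda>l. emp_mean n zs (clipped_surrogate l)"])
  show "dual_risk b \<le> dual_risk a" if "0 \<le> a" "a \<le> b" for a b
    using that by (rule dual_risk_antimono)
  show "0 \<le> lam_plus r w n zs"
    by (rule lam_plus_nonneg[OF r_nonneg assms(1,2)])
  show "0 < eps"
    by (rule assms(3))
  show "dual_risk (lam_plus r w n zs) \<le> dual_risk (g K) + real K * eps"
    using top g(1) by simp
  show "0 \<le> g j" for j
    by (rule g(2))
  show "dual_risk (g j) = dual_risk (g K) + real j * eps"
    if "j < K" "dual_risk (g K) + real j * eps \<le> dual_risk 0" for j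
    using g(1,3) that by simp
  show "dual_risk (g j) < emp_mean n zs (clipped_surrogate (g j)) + d" if "j \<le> K" for j
    using that by (rule deviation)
  show "emp_mean n zs (clipped_surrogate l) = emp_mean n zs (hinge w)"
    if "lam_plus r w n zs < l" for l
    using that lam_plus_nonneg[OF r_nonneg assms(1,2), where w = w]
      surrogate_exact_above_lam_plus[OF r_nonneg assms(1,2), where w = w]
    by (intro emp_mean_clipped_surrogate[OF _ assms(2)]) auto
  show "emp_mean n zs (clipped_surrogate (g K)) = emp_mean n zs (hinge w)"
    unfolding g(1)
    by (rule emp_mean_clipped_surrogate[OF lam_max_nonneg assms(2)
          surrogate_exact_lam_max[OF assms(2)]])
qed

lemma dual_risk_lam_plus_bound:
  assumes n: "0 < n" and \<delta>: "0 < \<delta>" "\<delta> < 1"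
  shows "\<exists>A\<in>sets (PiM {..<n} (\<lambda>_. P)). 1 - \<delta> \<le> measure (PiM {..<n} (\<lambda>_. P)) A \<and>
    (\<forall>zs\<in>A. (\<forall>i<n. zs i \<in> Zset r) \<and> dual_risk (lam_plus r w n zs) \<le> emp_mean n zs (hinge w)
      + (hinge_hi - hinge_lo) * (sqrt (ln (1 / \<delta>) / (2 * real n)) + 72 / sqrt n))"
proof -
  let ?M = "PiM {..<n} (\<lambda>_. P)"
  interpret M: prob_space ?M
    by (rule prob_space_PiM[OF prob_space_P])
  define R where "R = hinge_hi - hinge_lo"
  define L where "L = ln (1 / \<delta>)"
  define K where "K = nat \<lceil>(L + ln 2) / sqrt n\<rceil>"
  define eps where "eps = R / sqrt n"
  define d where "d = R * sqrt ((L + ln 2 + ln (real K + 1)) / (2 * real n))"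
  note size = grid_size[OF \<delta> n, folded L_def, folded K_def]
  have "0 < R" "0 < L" "0 < eps"
    using hinge_range_width(2) \<delta> n by (simp_all add: R_def L_def eps_def)
  then have "0 \<le> d"
    by (simp add: d_def)
  obtain T where T: "T \<in> sets ?M" "measure ?M T \<le> \<delta> / 2"
    and top: "\<And>zs. zs \<in> PiE {..<n} (\<lambda>_. Zset r) - T \<Longrightarrow>
      dual_risk (lam_plus r w n zs) \<le> dual_risk lam_max + real K * eps"
    using lam_plus_top_event[OF n, of "real K / sqrt n"] size(1) by (auto simp: eps_def R_def)
  obtain g where g: "g K = lam_max" "\<And>j. 0 \<le> g j"
    "\<And>j. j < K \<Longrightarrow> dual_risk lam_max + real j * eps \<le> dual_risk 0 \<Longrightarrow>
      dual_risk (g j) = dual_risk lam_max + real j * eps"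
    using dual_risk_grid[of eps K] \<open>0 < eps\<close> by auto
  define U where "U = (\<Union>j\<le>K. {zs \<in> space ?M.
      emp_mean n zs (clipped_surrogate (g j)) \<le> dual_risk (g j) - d})"
  have "2 * real n * d\<^sup>2 / R\<^sup>2 = L + ln 2 + ln (real K + 1)"
    using \<open>0 < R\<close> \<open>0 < L\<close> n by (simp add: d_def power_mult_distrib)
  then have U: "U \<in> sets ?M" "measure ?M U \<le> \<delta> / 2"
    using grid_deviation_event[where g = g and K = K, OF n g(2) \<open>0 \<le> d\<close>] size(2)
    unfolding U_def R_def by simp_all
  define A where "A = PiE {..<n} (\<lambda>_. Zset r) - (T \<union> U)"
  have "PiE {..<n} (\<lambda>_. Zset r) \<in> sets ?M"
    by (intro sets_PiM_I_finite) (auto simp: sets_Zset)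
  then have A: "A \<in> sets ?M"
    unfolding A_def using T U by auto
  have "measure ?M (PiE {..<n} (\<lambda>_. Zset r)) = 1"
    using measure_PiM_PiE_power[OF prob_space_P sets_Zset] measure_Zset by simp
  then have measure_A: "1 - \<delta> \<le> measure ?M A"
    using M.prob_Diff_Un_ge[OF \<open>PiE {..<n} (\<lambda>_. Zset r) \<in> sets ?M\<close> T(1) U(1) _ T(2) U(2)]
    unfolding A_def by simp
  have grid_bound: "dual_risk (lam_plus r w n zs) \<le> emp_mean n zs (hinge w) + d + eps"
    if "zs \<in> A" for zs
  proof (rule dual_risk_lam_plus_le_grid[OF n _ \<open>0 < eps\<close> g])
    show "\<forall>i<n. zs i \<in> Zset r"
      using \<open>zs \<in> A\<close> unfolding A_def by auto
    show "dual_risk (lam_plus r w n zs) \<le> dual_risk lam_max + real K * eps"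
      using \<open>zs \<in> A\<close> top unfolding A_def by blast
    have "zs \<in> space ?M"
      using \<open>zs \<in> A\<close> unfolding A_def by (auto simp: space_PiM PiE_iff space_P)
    moreover have
      "zs \<notin> {zs \<in> space ?M. emp_mean n zs (clipped_surrogate (g j)) \<le> dual_risk (g j) - d}"
      if "j \<le> K" for j
      using \<open>zs \<in> A\<close> that unfolding A_def U_def by blast
    ultimately show "dual_risk (g j) < emp_mean n zs (clipped_surrogate (g j)) + d" if "j \<le> K" for j
      using that by fastforce
  qed
  have slack: "d + eps \<le> R * (sqrt (L / (2 * real n)) + 72 / sqrt n)"
    using mult_left_mono[OF size(3) less_imp_le[OF \<open>0 < R\<close>]]
    by (simp add: d_def eps_def algebra_simps)
  show ?thesis
  proof (intro bexI[OF _ A] conjI ballI)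
    fix zs assume "zs \<in> A"
    then show "\<forall>i<n. zs i \<in> Zset r"
      unfolding A_def by auto
    show "dual_risk (lam_plus r w n zs) \<le> emp_mean n zs (hinge w)
        + (hinge_hi - hinge_lo) * (sqrt (ln (1 / \<delta>) / (2 * real n)) + 72 / sqrt n)"
      using grid_bound[OF \<open>zs \<in> A\<close>] slack unfolding R_def L_def by linarith
  qed (rule measure_A)
qed

lemma width_term_le:
  fixes n :: nat
  assumes "0 \<le> a" "0 < n" "0 \<le> c"
  shows "(hinge_hi - hinge_lo) * (a + 72 / sqrt n)
    \<le> 144 / sqrt n * Lam * r * sqrt (real CARD('n)) + c + (1 + Lam * r) * a"
proof -
  have "(hinge_hi - hinge_lo) * 72 \<le> 144 * Lam * r"
    using hinge_range_width(3) by simp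
  also have "\<dots> \<le> 144 * Lam * r * sqrt (real CARD('n))"
    using r_pos Lam_pos by simp
  finally have "(hinge_hi - hinge_lo) * 72 \<le> 144 * Lam * r * sqrt (real CARD('n))" .
  then have "(hinge_hi - hinge_lo) * 72 / sqrt n \<le> 144 * Lam * r * sqrt (real CARD('n)) / sqrt n"
    by (rule divide_right_mono) simp
  then have "(hinge_hi - hinge_lo) * (72 / sqrt n) \<le> 144 / sqrt n * Lam * r * sqrt (real CARD('n))"
    by simp
  moreover have "(hinge_hi - hinge_lo) * a \<le> (1 + Lam * r) * a"
    using hinge_range_width(4) assms(1) by (rule mult_right_mono)
  ultimately show ?thesis
    using assms(3) by (simp add: distrib_left)
qed

end

lemma lam_minus_bounds:
  assumes "0 \<le> lam_plus r w n zs"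
  shows "0 \<le> lam_minus r B w n zs" and "lam_minus r B w n zs \<le> lam_plus r w n zs"
proof -
  let ?S = "{lam. 0 \<le> lam \<and> lam \<le> lam_plus r w n zs \<and>
    psi r w n zs lam = lam_plus r w n zs * epsB B}"
  have "0 \<le> lam_minus r B w n zs \<and> lam_minus r B w n zs \<le> lam_plus r w n zs"
  proof (cases "?S = {}")
    case True
    then show ?thesis
      using assms by (simp add: lam_minus_def)
  next
    case False
    then obtain l where "l \<in> ?S"
      by blast
    moreover have "bdd_above ?S"
      by (rule bdd_aboveI[of _ "lam_plus r w n zs"]) auto
    ultimately have "0 \<le> Sup ?S"
      using cSup_upper[of l ?S] by auto
    moreover have "Sup ?S \<le> lam_plus r w n zs"
      by (rule cSup_least[OF False]) auto
    ultimately show ?thesis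
      using False by (simp add: lam_minus_def Let_def)
  qed
  then show "0 \<le> lam_minus r B w n zs" and "lam_minus r B w n zs \<le> lam_plus r w n zs"
    by auto
qed

lemma Lambda_eps_nonneg:
  fixes B :: "(real^'n) set"
  assumes "0 < r" "0 < Lam" "0 < n" "0 \<le> epsB B"
  shows "0 \<le> Lambda_eps r Lam B n"
proof -
  let ?O = "{(w, zs). norm (w::real^'n) \<le> Lam \<and> (\<forall>i<n. zs i \<in> Zset r)}"
  let ?hi = "\<lambda>p. zeta_hi r Lam B (fst p) n (snd p)"
  let ?lo = "\<lambda>p. zeta_lo r Lam B (fst p) n (snd p)"
  have bounds: "0 \<le> ?lo p \<and> ?lo p \<le> ?hi p \<and>
      ?hi p \<le> max ((1 + Lam * r) / epsB B) (max (2 * Lam * r) Lam)"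
    if "p \<in> ?O" for p
  proof -
    obtain w zs where p: "p = (w, zs)" "norm w \<le> Lam" "\<forall>i<n. zs i \<in> Zset r"
      using \<open>p \<in> ?O\<close> by auto
    have "max (2 * norm w * r) (norm w) \<le> max (2 * Lam * r) Lam"
      using mult_right_mono[OF p(2), of r] assms by (intro max.mono) auto
    then have lam_plus: "0 \<le> lam_plus r w n zs" "lam_plus r w n zs \<le> max (2 * Lam * r) Lam"
      using lam_plus_nonneg[of r n zs w] lam_plus_le_max[of r n zs w] p assms by force+
    show ?thesis
      unfolding p(1) fst_conv snd_conv zeta_hi_def zeta_lo_def
      using lam_plus lam_minus_bounds[OF lam_plus(1), of B] assms by auto
  qed
  have witness: "(0, \<lambda>_. (0, 1)) \<in> ?O"
    using assms by auto
  have "(INF p\<in>?O. ?lo p) \<le> ?lo (0, \<lambda>_. (0, 1))"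
    by (rule cINF_lower[OF bdd_belowI2[where m = 0] witness]) (use bounds in blast)
  also have "\<dots> \<le> ?hi (0, \<lambda>_. (0, 1))"
    using bounds[OF witness] by blast
  also have "\<dots> \<le> (SUP p\<in>?O. ?hi p)"
    by (rule cSUP_upper[OF witness bdd_aboveI2]) (use bounds in blast)
  finally show ?thesis
    unfolding Lambda_eps_def by simp
qed

theorem corollary2:
  fixes P :: "((real^'n) \<times> real) measure"
    and B :: "(real^'n) set" and w :: "real^'n"
    and r Lam \<delta> :: real and n :: nat
  assumes "0 < r" and "0 < Lam"
    and "prob_space P" and "sets P = sets borel" and "measure P (Zset r) = 1"
    and "B \<noteq> {}" and "closed B" and "convex B" and "bounded B"
    and "\<forall>v\<in>B. - v \<in> B"
    and "\<forall>x\<in>cball 0 r. Nbhd r B x \<noteq> {}"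
    and "norm w \<le> Lam"
    and "0 < \<delta>" and "\<delta> < 1" and "0 < n"
  shows "(\<exists>A\<in>sets (PiM {..<n} (\<lambda>_. P)).
            1 - \<delta> \<le> measure (PiM {..<n} (\<lambda>_. P)) A \<and>
            (\<forall>zs\<in>A.
               adv_risk P r B w
               \<le> emp_mean n zs (hinge w)
                 + lam_plus r w n zs * epsB B
                 + 144 / sqrt (real n) * Lam * r * sqrt (real CARD('n))
                 + 12 * sqrt pi / sqrt (real n) * Lambda_eps r Lam B n * (2 * r + 1)
                 + (1 + Lam * r) * sqrt (ln (1 / \<delta>) / (2 * real n))))
         \<and> (\<forall>zs. (\<forall>i<n. zs i \<in> Zset r) \<longrightarrow>
               lam_plus r w n zs
               \<le> Max ({2 * snd (zs i) * (w \<bullet> fst (zs i)) | i. i < n} \<union> {norm w}))"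
proof -
  interpret hinge_risk r Lam w P
    using assms by (simp add: hinge_risk_def)
  have "0 \<le> epsB B"
    using epsB_nonneg assms(6,9) by blast
  have confidence_term_nonneg: "0 \<le> sqrt (ln (1 / \<delta>) / (2 * real n))"
    using assms(13,14) by simp
  have Lambda_eps_term_nonneg:
    "0 \<le> 12 * sqrt pi / sqrt (real n) * Lambda_eps r Lam B n * (2 * r + 1)"
    using Lambda_eps_nonneg[OF assms(1,2,15) \<open>0 \<le> epsB B\<close>] assms(1) by simp
  note width = width_term_le[OF confidence_term_nonneg assms(15) Lambda_eps_term_nonneg]
  obtain A where "A \<in> sets (PiM {..<n} (\<lambda>_. P))" "1 - \<delta> \<le> measure (PiM {..<n} (\<lambda>_. P)) A"
    and A: "\<And>zs. zs \<in> A \<Longrightarrow> (\<forall>i<n. zs i \<in> Zset r) \<and> dual_risk (lam_plus r w n zs)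
      \<le> emp_mean n zs (hinge w)
        + (hinge_hi - hinge_lo) * (sqrt (ln (1 / \<delta>) / (2 * real n)) + 72 / sqrt n)"
    using dual_risk_lam_plus_bound[OF assms(15,13,14)] by blast
  have "adv_risk P r B w
      \<le> emp_mean n zs (hinge w)
        + lam_plus r w n zs * epsB B
        + 144 / sqrt (real n) * Lam * r * sqrt (real CARD('n))
        + 12 * sqrt pi / sqrt (real n) * Lambda_eps r Lam B n * (2 * r + 1)
        + (1 + Lam * r) * sqrt (ln (1 / \<delta>) / (2 * real n))"
    if "zs \<in> A" for zs
  proof -
    have "0 \<le> lam_plus r w n zs"
      using A[OF that] by (intro lam_plus_nonneg[OF r_nonneg assms(15)]) blast
    then show ?thesis
      using adv_risk_le_dual_risk[OF assms(9,11) \<open>0 \<le> epsB B\<close>] A[OF that] width by fastforce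
  qed
  then show ?thesis
    using \<open>A \<in> sets (PiM {..<n} (\<lambda>_. P))\<close> \<open>1 - \<delta> \<le> measure (PiM {..<n} (\<lambda>_. P)) A\<close>
      lam_plus_le_Max[OF r_nonneg assms(15)] by blast
qed

end
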